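(* Let $n$ be a natural number and let $(L_x)_{x\in S}$ be an $S$-glued system in which every $L_x$ is semimodular of breadth at most $n$. Then its $S$-glued sum $L$ is semimodular and has breadth at most $n$.
   Context: Let $S$ be a lattice of finite length (every chain in $S$ is finite), with order $\le$, join $\vee$ and meet $\wedge$; $x\prec y$ means that $y$ covers $x$. An \emph{$S$-glued system} is a family $(L_x,\le_x)_{x\in S}$ of lattices of finite length (with join $+_x$, meet $\cdot_x$, least element $0_x$, greatest element $1_x$), whose underlying sets may overlap, such that for all $x,y\in S$: (1) if $x\le y$ and $L_x\cap L_y\ne\emptyset$, then $L_x\cap L_y$ is a filter of $L_x$ and an ideal of $L_y$; (2) in the situation of (1), for all $a,b\in L_x\cap L_y$: $a\le_x b$ iff $a\le_y b$; (3) if $x\prec y$ then $L_x\cap L_y\ne\emptyset$; (4) $L_x\cap L_y\subseteq L_{x\wedge y}\cap L_{x\vee y}$. The \emph{$S$-glued sum} of the system is the set $L=\bigcup_{x\in S}L_x$ equipped with the relation $\le$ defined as the transitive closure of $\bigcup_{x\in S}\le_x$; it is a lattice. A lattice $K$ of finite length is \emph{semimodular} if whenever $b\ne c$ both cover $a$ in $K$, then $b\vee c$ covers both $b$ and $c$. The \emph{breadth} of a lattice $K$ is the supremum of all $m$ for which there is a map $\varphi$ from the Boolean lattice $\mathbf{2}^m$ (all subsets of an $m$-element set) into $K$ with $\varphi(a)\le\varphi(b)\iff a\le b$ for all $a,b$. *)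

theory Defs
  imports Main
begin

text \<open>Posets and lattices given by a carrier set A and an order relation le on it.
  Several such structures may live in one ambient type and have overlapping carriers.\<close>

definition partial_order_on' :: "'a set \<Rightarrow> ('a \<Rightarrow> 'a \<Rightarrow> bool) \<Rightarrow> bool" where
  "partial_order_on' A le \<longleftrightarrow>
     (\<forall>a\<in>A. le a a) \<and>
     (\<forall>a\<in>A. \<forall>b\<in>A. le a b \<and> le b a \<longrightarrow> a = b) \<and>
     (\<forall>a\<in>A. \<forall>b\<in>A. \<forall>c\<in>A. le a b \<and> le b c \<longrightarrow> le a c)"

definition is_lub :: "'a set \<Rightarrow> ('a \<Rightarrow> 'a \<Rightarrow> bool) \<Rightarrow> 'a \<Rightarrow> 'a \<Rightarrow> 'a \<Rightarrow> bool" where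
  "is_lub A le a b j \<longleftrightarrow> j \<in> A \<and> le a j \<and> le b j \<and>
     (\<forall>u\<in>A. le a u \<and> le b u \<longrightarrow> le j u)"

definition is_glb :: "'a set \<Rightarrow> ('a \<Rightarrow> 'a \<Rightarrow> bool) \<Rightarrow> 'a \<Rightarrow> 'a \<Rightarrow> 'a \<Rightarrow> bool" where
  "is_glb A le a b m \<longleftrightarrow> m \<in> A \<and> le m a \<and> le m b \<and>
     (\<forall>u\<in>A. le u a \<and> le u b \<longrightarrow> le u m)"

definition is_lattice_on :: "'a set \<Rightarrow> ('a \<Rightarrow> 'a \<Rightarrow> bool) \<Rightarrow> bool" where
  "is_lattice_on A le \<longleftrightarrow> partial_order_on' A le \<and>
     (\<forall>a\<in>A. \<forall>b\<in>A. (\<exists>j. is_lub A le a b j) \<and> (\<exists>m. is_glb A le a b m))"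

definition finite_length_on :: "'a set \<Rightarrow> ('a \<Rightarrow> 'a \<Rightarrow> bool) \<Rightarrow> bool" where
  "finite_length_on A le \<longleftrightarrow>
     (\<forall>C. C \<subseteq> A \<and> (\<forall>a\<in>C. \<forall>b\<in>C. le a b \<or> le b a) \<longrightarrow> finite C)"

text \<open>A (nonempty, hence bounded) lattice of finite length.\<close>
definition fl_lattice :: "'a set \<Rightarrow> ('a \<Rightarrow> 'a \<Rightarrow> bool) \<Rightarrow> bool" where
  "fl_lattice A le \<longleftrightarrow> A \<noteq> {} \<and> is_lattice_on A le \<and> finite_length_on A le"

definition covers_in :: "'a set \<Rightarrow> ('a \<Rightarrow> 'a \<Rightarrow> bool) \<Rightarrow> 'a \<Rightarrow> 'a \<Rightarrow> bool" where
  "covers_in A le a b \<longleftrightarrow> a \<in> A \<and> b \<in> A \<and> le a b \<and> a \<noteq> b \<and>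
     \<not> (\<exists>c\<in>A. le a c \<and> le c b \<and> c \<noteq> a \<and> c \<noteq> b)"

definition semimodular_on :: "'a set \<Rightarrow> ('a \<Rightarrow> 'a \<Rightarrow> bool) \<Rightarrow> bool" where
  "semimodular_on A le \<longleftrightarrow>
     (\<forall>a b c j. covers_in A le a b \<and> covers_in A le a c \<and> b \<noteq> c \<and> is_lub A le b c j
        \<longrightarrow> covers_in A le b j \<and> covers_in A le c j)"

definition breadth_le :: "'a set \<Rightarrow> ('a \<Rightarrow> 'a \<Rightarrow> bool) \<Rightarrow> nat \<Rightarrow> bool" where
  "breadth_le A le n \<longleftrightarrow>
     (\<forall>m (\<phi> :: nat set \<Rightarrow> 'a).
        (\<forall>X. X \<subseteq> {0..<m} \<longrightarrow> \<phi> X \<in> A) \<and>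
        (\<forall>X Y. X \<subseteq> {0..<m} \<and> Y \<subseteq> {0..<m} \<longrightarrow> (le (\<phi> X) (\<phi> Y) \<longleftrightarrow> X \<subseteq> Y))
        \<longrightarrow> m \<le> n)"

definition is_filter_on :: "'a set \<Rightarrow> ('a \<Rightarrow> 'a \<Rightarrow> bool) \<Rightarrow> 'a set \<Rightarrow> bool" where
  "is_filter_on A le F \<longleftrightarrow> F \<subseteq> A \<and> F \<noteq> {} \<and>
     (\<forall>a\<in>F. \<forall>b\<in>A. le a b \<longrightarrow> b \<in> F) \<and>
     (\<forall>a\<in>F. \<forall>b\<in>F. \<forall>m. is_glb A le a b m \<longrightarrow> m \<in> F)"

definition is_ideal_on :: "'a set \<Rightarrow> ('a \<Rightarrow> 'a \<Rightarrow> bool) \<Rightarrow> 'a set \<Rightarrow> bool" where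
  "is_ideal_on A le I \<longleftrightarrow> I \<subseteq> A \<and> I \<noteq> {} \<and>
     (\<forall>a\<in>I. \<forall>b\<in>A. le b a \<longrightarrow> b \<in> I) \<and>
     (\<forall>a\<in>I. \<forall>b\<in>I. \<forall>j. is_lub A le a b j \<longrightarrow> j \<in> I)"

definition finite_length_type :: "'b::lattice itself \<Rightarrow> bool" where
  "finite_length_type _ \<longleftrightarrow>
     (\<forall>C::'b set. (\<forall>x\<in>C. \<forall>y\<in>C. x \<le> y \<or> y \<le> x) \<longrightarrow> finite C)"

definition covers_S :: "'b::order \<Rightarrow> 'b \<Rightarrow> bool" where
  "covers_S x y \<longleftrightarrow> x < y \<and> \<not> (\<exists>z. x < z \<and> z < y)"

definition glued_system :: "('b::lattice \<Rightarrow> 'a set) \<Rightarrow> ('b \<Rightarrow> 'a \<Rightarrow> 'a \<Rightarrow> bool) \<Rightarrow> bool" where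
  "glued_system L R \<longleftrightarrow>
     finite_length_type TYPE('b) \<and>
     (\<forall>x. fl_lattice (L x) (R x)) \<and>
     (\<forall>x y. x \<le> y \<and> L x \<inter> L y \<noteq> {} \<longrightarrow>
        is_filter_on (L x) (R x) (L x \<inter> L y) \<and> is_ideal_on (L y) (R y) (L x \<inter> L y)) \<and>
     (\<forall>x y. x \<le> y \<and> L x \<inter> L y \<noteq> {} \<longrightarrow>
        (\<forall>a\<in>L x \<inter> L y. \<forall>b\<in>L x \<inter> L y. R x a b \<longleftrightarrow> R y a b)) \<and>
     (\<forall>x y. covers_S x y \<longrightarrow> L x \<inter> L y \<noteq> {}) \<and>
     (\<forall>x y. L x \<inter> L y \<subseteq> L (inf x y) \<inter> L (sup x y))"

definition glued_carrier :: "('b \<Rightarrow> 'a set) \<Rightarrow> 'a set" where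
  "glued_carrier L = (\<Union>x. L x)"

definition glued_le :: "('b \<Rightarrow> 'a set) \<Rightarrow> ('b \<Rightarrow> 'a \<Rightarrow> 'a \<Rightarrow> bool) \<Rightarrow> 'a \<Rightarrow> 'a \<Rightarrow> bool" where
  "glued_le L R = tranclp (\<lambda>a b. \<exists>x. a \<in> L x \<and> b \<in> L x \<and> R x a b)"

end

(*
  Two facts about the glued sum L drive the proof. First, the order of L restricted to a
  component L_x is the order of L_x, and the components containing a given element form an
  interval of S; so a cover of L lies in a single component, and covers of a component remain
  covers in L. Second, any path of component steps from u in L_y towards a component above y'
  can be rerouted through L_y \<inter> L_y'. From this, the meet in L_x of two elements is their meet
  in L, joins in L are computed in L_(x \<or> y) from the least elements above the arguments, and
  meets in L follow by reversing S and all components.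

  Semimodularity transfers because two covers of a lie in a common component, where their
  join is computed. For breadth, an embedding of 2^m into L yields elements e_i and w_j with
  e_i \<le> w_j iff i \<noteq> j. In a minimal component L_x holding an upper bound of all e_i, the
  least elements above the e_i together with suitable separators again form such a family, and
  the joins of its subfamilies embed 2^m into L_x.
*)

theory Submission
  imports Defs "HOL-Library.Dual_Ordered_Lattice"
begin

lemma partial_order_on'_converse:
  "partial_order_on' A le \<Longrightarrow> partial_order_on' A (\<lambda>a b. le b a)"
  unfolding partial_order_on'_def by blast

lemma finite_length_on_converse:
  "finite_length_on A le \<Longrightarrow> finite_length_on A (\<lambda>a b. le b a)"
  unfolding finite_length_on_def by blast

(* Since \<lambda>a b. le b a matches every order, these equations loop when given to the
   simplifier together. *)
lemma is_lub_converse: "is_lub A (\<lambda>a b. le b a) a b j \<longleftrightarrow> is_glb A le a b j"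
  unfolding is_lub_def is_glb_def by simp

lemma is_glb_converse: "is_glb A (\<lambda>a b. le b a) a b m \<longleftrightarrow> is_lub A le a b m"
  unfolding is_lub_def is_glb_def by simp

lemma is_filter_on_converse: "is_filter_on A (\<lambda>a b. le b a) F \<longleftrightarrow> is_ideal_on A le F"
  unfolding is_filter_on_def is_ideal_on_def is_glb_converse by simp

lemma is_ideal_on_converse: "is_ideal_on A (\<lambda>a b. le b a) F \<longleftrightarrow> is_filter_on A le F"
  unfolding is_filter_on_def is_ideal_on_def is_lub_converse by simp

lemma fl_lattice_converse:
  assumes "fl_lattice A le"
  shows "fl_lattice A (\<lambda>a b. le b a)"
proof -
  have ne: "A \<noteq> {}" and po: "partial_order_on' A le" and fl: "finite_length_on A le"
    and lat: "\<forall>a\<in>A. \<forall>b\<in>A. (\<exists>j. is_lub A le a b j) \<and> (\<exists>m. is_glb A le a b m)"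
    using assms unfolding fl_lattice_def is_lattice_on_def by blast+
  show ?thesis
    unfolding fl_lattice_def is_lattice_on_def
  proof (intro conjI ballI)
    fix a b assume "a \<in> A" "b \<in> A"
    then show "\<exists>j. is_lub A (\<lambda>a b. le b a) a b j" unfolding is_lub_converse using lat by blast
    show "\<exists>m. is_glb A (\<lambda>a b. le b a) a b m"
      using \<open>a \<in> A\<close> \<open>b \<in> A\<close> unfolding is_glb_converse using lat by blast
  qed (fact ne, fact partial_order_on'_converse[OF po], fact finite_length_on_converse[OF fl])
qed

lemma wf_strict_if_finite_length_on:
  assumes fl: "finite_length_on A le" and po: "partial_order_on' A le"
  shows "wf {(a, b). a \<in> A \<and> b \<in> A \<and> le a b \<and> a \<noteq> b}"
proof (rule ccontr)
  have refl: "\<And>a. a \<in> A \<Longrightarrow> le a a"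
    and antisym: "\<And>a b. a \<in> A \<Longrightarrow> b \<in> A \<Longrightarrow> le a b \<Longrightarrow> le b a \<Longrightarrow> a = b"
    and trans: "\<And>a b c. a \<in> A \<Longrightarrow> b \<in> A \<Longrightarrow> c \<in> A \<Longrightarrow> le a b \<Longrightarrow> le b c \<Longrightarrow> le a c"
    using po unfolding partial_order_on'_def by blast+
  assume "\<not> ?thesis"
  then obtain f where f: "\<And>i. f i \<in> A" "\<And>i. le (f (Suc i)) (f i)" "\<And>i. f (Suc i) \<noteq> f i"
    unfolding wf_iff_no_infinite_down_chain by auto
  have descending: "le (f j) (f i)" if "i \<le> j" for i j
    using that
  proof (induction rule: dec_induct)
    case base
    show ?case using refl f(1) .
  next
    case (step k)
    then show ?case using trans f(1,2) by blast
  qed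
  have "f i \<noteq> f j" if "i < j" for i j
  proof
    assume "f i = f j"
    then have "le (f i) (f (Suc i))" using descending[of "Suc i" j] that by simp
    then show False using antisym[OF f(1) f(1) f(2)] f(3) by blast
  qed
  then have "inj f"
    by (metis injI linorder_neqE_nat)
  moreover have "finite (range f)"
  proof -
    have "le x y \<or> le y x" if "x \<in> range f" "y \<in> range f" for x y
      using that descending nat_le_linear by blast
    moreover have "range f \<subseteq> A" using f(1) by blast
    ultimately show ?thesis using fl unfolding finite_length_on_def by blast
  qed
  ultimately show False
    using finite_imageD infinite_UNIV_nat by blast
qed

lemma fl_lattice_least_in_glb_closed:
  assumes L: "fl_lattice A le" and B: "B \<subseteq> A" "b0 \<in> B"
    and glb_closed: "\<And>a b m. a \<in> B \<Longrightarrow> b \<in> B \<Longrightarrow> is_glb A le a b m \<Longrightarrow> m \<in> B"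
  shows "\<exists>b\<in>B. \<forall>c\<in>B. le b c"
proof -
  have fl: "finite_length_on A le" and po: "partial_order_on' A le"
    and glb: "\<And>a b. a \<in> A \<Longrightarrow> b \<in> A \<Longrightarrow> \<exists>m. is_glb A le a b m"
    using L unfolding fl_lattice_def is_lattice_on_def by auto
  obtain b where b: "b \<in> B"
    and minimal: "\<And>c. (c, b) \<in> {(a, b). a \<in> A \<and> b \<in> A \<and> le a b \<and> a \<noteq> b} \<Longrightarrow> c \<notin> B"
    using wfE_min[OF wf_strict_if_finite_length_on[OF fl po] B(2)] by blast
  have "le b c" if c: "c \<in> B" for c
  proof -
    obtain m where m: "is_glb A le b c m" using glb b c B(1) by blast
    then have "m \<in> B" using glb_closed b c by blast
    moreover have "le m b" "m \<in> A" using m unfolding is_glb_def by blast+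
    ultimately have "m = b" using minimal[of m] b B(1) by auto
    then show ?thesis using m unfolding is_glb_def by simp
  qed
  then show ?thesis using b by blast
qed

lemma fl_lattice_top:
  assumes "fl_lattice A le"
  shows "\<exists>t\<in>A. \<forall>c\<in>A. le c t"
proof -
  obtain a0 where "a0 \<in> A" using assms unfolding fl_lattice_def by blast
  then show ?thesis
    using fl_lattice_least_in_glb_closed[OF fl_lattice_converse[OF assms] subset_refl]
    unfolding is_glb_converse is_lub_def by blast
qed

lemma fl_lattice_sup_exists:
  assumes L: "fl_lattice A le" and f: "\<And>i. i \<in> I \<Longrightarrow> f i \<in> A"
  shows "\<exists>p. p \<in> A \<and> (\<forall>i\<in>I. le (f i) p) \<and> (\<forall>c\<in>A. (\<forall>i\<in>I. le (f i) c) \<longrightarrow> le p c)"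
proof -
  define U where "U = {c \<in> A. \<forall>i\<in>I. le (f i) c}"
  obtain t where t: "t \<in> A" "\<And>c. c \<in> A \<Longrightarrow> le c t" using fl_lattice_top[OF L] by blast
  have "\<exists>p\<in>U. \<forall>c\<in>U. le p c"
  proof (rule fl_lattice_least_in_glb_closed[OF L])
    show "U \<subseteq> A" "t \<in> U" unfolding U_def using t f by blast+
    fix c d g assume "c \<in> U" "d \<in> U" "is_glb A le c d g"
    then show "g \<in> U" using f unfolding U_def is_glb_def by blast
  qed
  then show ?thesis unfolding U_def by blast
qed

(* X \<mapsto> \<Squnion>{a i | i \<in> X} embeds 2^m: for j \<in> X - Y we would get a j \<le> \<Squnion>X \<le> \<Squnion>Y \<le> b j. *)
lemma breadth_le_separating_family:
  assumes L: "fl_lattice A le" and n: "breadth_le A le n"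
    and a: "\<And>i. i < m \<Longrightarrow> a i \<in> A" and b: "\<And>j. j < m \<Longrightarrow> b j \<in> A"
    and separating: "\<And>i j. i < m \<Longrightarrow> j < m \<Longrightarrow> le (a i) (b j) \<longleftrightarrow> i \<noteq> j"
  shows "m \<le> n"
proof -
  have trans: "\<And>x y z. x \<in> A \<Longrightarrow> y \<in> A \<Longrightarrow> z \<in> A \<Longrightarrow> le x y \<Longrightarrow> le y z \<Longrightarrow> le x z"
    using L unfolding fl_lattice_def is_lattice_on_def partial_order_on'_def by blast
  define is_join where
    "is_join X p \<longleftrightarrow> p \<in> A \<and> (\<forall>i\<in>X. le (a i) p) \<and> (\<forall>c\<in>A. (\<forall>i\<in>X. le (a i) c) \<longrightarrow> le p c)"
    for X p
  define join where "join X = (SOME p. is_join X p)" for X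
  have join: "is_join X (join X)" if "X \<subseteq> {0..<m}" for X
    unfolding join_def is_join_def
    by (rule someI_ex, rule fl_lattice_sup_exists[OF L]) (use a that in auto)
  have "le (join X) (join Y) \<longleftrightarrow> X \<subseteq> Y" if XY: "X \<subseteq> {0..<m}" "Y \<subseteq> {0..<m}" for X Y
  proof
    assume le_XY: "le (join X) (join Y)"
    show "X \<subseteq> Y"
    proof
      fix j assume "j \<in> X"
      then have "j < m" using XY by auto
      show "j \<in> Y"
      proof (rule ccontr)
        assume "j \<notin> Y"
        then have "\<forall>i\<in>Y. le (a i) (b j)" using separating XY(2) \<open>j < m\<close> by auto
        then have "le (join Y) (b j)" using join[OF XY(2)] b[OF \<open>j < m\<close>] unfolding is_join_def by blast
        moreover have "le (a j) (join X)" using join[OF XY(1)] \<open>j \<in> X\<close> unfolding is_join_def by blast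
        moreover have "join X \<in> A" "join Y \<in> A" using join XY unfolding is_join_def by blast+
        ultimately have "le (a j) (b j)"
          using trans[OF a[OF \<open>j < m\<close>]] b[OF \<open>j < m\<close>] le_XY by metis
        then show False using separating \<open>j < m\<close> by blast
      qed
    qed
  next
    assume "X \<subseteq> Y"
    then show "le (join X) (join Y)" using join[OF XY(1)] join[OF XY(2)] unfolding is_join_def by blast
  qed
  moreover have "join X \<in> A" if "X \<subseteq> {0..<m}" for X using join[OF that] unfolding is_join_def by blast
  ultimately show ?thesis
    using n[unfolded breadth_le_def, rule_format, of m join] by blast
qed

lemma tranclp_first_proper_step:
  "r\<^sup>+\<^sup>+ a b \<Longrightarrow> a \<noteq> b \<Longrightarrow> \<exists>t. r a t \<and> t \<noteq> a \<and> r\<^sup>*\<^sup>* t b"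
proof (induction rule: converse_tranclp_induct)
  case (base y)
  then show ?case by blast
next
  case (step y z)
  then show ?case by (cases "z = y") (auto dest: tranclp_into_rtranclp)
qed

lemma finite_length_on_UNIV_if_finite_length_type:
  "finite_length_type TYPE('b::lattice) \<Longrightarrow> finite_length_on UNIV ((\<le>) :: 'b \<Rightarrow> 'b \<Rightarrow> bool)"
  unfolding finite_length_type_def finite_length_on_def by blast

lemma partial_order_on'_UNIV: "partial_order_on' UNIV ((\<le>) :: 'b::order \<Rightarrow> 'b \<Rightarrow> bool)"
  unfolding partial_order_on'_def by auto

lemma wf_less_if_finite_length_type:
  assumes "finite_length_type TYPE('b::lattice)"
  shows "wf {(a, b). (a::'b) < b}"
  by (rule wf_subset[OF wf_strict_if_finite_length_on[OF
        finite_length_on_UNIV_if_finite_length_type[OF assms] partial_order_on'_UNIV]])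
    (auto simp: less_le)

lemma wf_greater_if_finite_length_type:
  assumes "finite_length_type TYPE('b::lattice)"
  shows "wf {(a, b). (b::'b) < a}"
  by (rule wf_subset[OF wf_strict_if_finite_length_on[OF
        finite_length_on_converse[OF finite_length_on_UNIV_if_finite_length_type[OF assms]]
        partial_order_on'_converse[OF partial_order_on'_UNIV]]])
    (auto simp: less_le)

lemma exists_covers_S_above:
  assumes "finite_length_type TYPE('b::lattice)" and "(x::'b) < z"
  shows "\<exists>y. covers_S x y \<and> y \<le> z"
proof -
  have "z \<in> {t. x < t \<and> t \<le> z}" using assms(2) by simp
  then obtain y where y: "y \<in> {t. x < t \<and> t \<le> z}"
    and minimal: "\<And>t. (t, y) \<in> {(a, b). a < b} \<Longrightarrow> t \<notin> {t. x < t \<and> t \<le> z}"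
    by (rule wfE_min[OF wf_less_if_finite_length_type[OF assms(1)]]) blast
  have "covers_S x y"
    unfolding covers_S_def
  proof (intro conjI notI)
    show "x < y" using y by simp
    assume "\<exists>t. x < t \<and> t < y"
    then obtain t where "x < t" "t < y" by blast
    moreover have "t \<le> z" using \<open>t < y\<close> y by (simp add: order.strict_implies_order order.strict_trans2)
    ultimately show False using minimal[of t] by simp
  qed
  then show ?thesis using y by blast
qed

lemma exists_covers_S_below:
  assumes "finite_length_type TYPE('b::lattice)" and "(y::'b) < x"
  shows "\<exists>w. y \<le> w \<and> covers_S w x"
proof -
  have "y \<in> {t. y \<le> t \<and> t < x}" using assms(2) by simp
  then obtain w where w: "w \<in> {t. y \<le> t \<and> t < x}"
    and maximal: "\<And>t. (t, w) \<in> {(a, b). b < a} \<Longrightarrow> t \<notin> {t. y \<le> t \<and> t < x}"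
    by (rule wfE_min[OF wf_greater_if_finite_length_type[OF assms(1)]]) blast
  have "covers_S w x"
    unfolding covers_S_def
  proof (intro conjI notI)
    show "w < x" using w by simp
    assume "\<exists>t. w < t \<and> t < x"
    then obtain t where "w < t" "t < x" by blast
    moreover have "y \<le> t" using \<open>w < t\<close> w by (auto intro: order.trans order.strict_implies_order)
    ultimately show False using maximal[of t] by simp
  qed
  then show ?thesis using w by blast
qed

lemma finite_length_type_upward_induct:
  assumes "finite_length_type TYPE('b::lattice)"
    and "\<And>y. (\<And>y'. y < y' \<Longrightarrow> P y') \<Longrightarrow> P y"
  shows "P (x::'b)"
  by (induction x rule: wf_induct_rule[OF wf_greater_if_finite_length_type[OF assms(1)]])
    (use assms(2) in blast)

definition glued_step :: "('b \<Rightarrow> 'a set) \<Rightarrow> ('b \<Rightarrow> 'a \<Rightarrow> 'a \<Rightarrow> bool) \<Rightarrow> 'a \<Rightarrow> 'a \<Rightarrow> bool" where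
  "glued_step L R a b \<longleftrightarrow> (\<exists>x. a \<in> L x \<and> b \<in> L x \<and> R x a b)"

lemma glued_le_eq_tranclp: "glued_le L R = (glued_step L R)\<^sup>+\<^sup>+"
  unfolding glued_le_def glued_step_def by simp

locale glued_sum =
  fixes L :: "'b::lattice \<Rightarrow> 'a set" and R :: "'b \<Rightarrow> 'a \<Rightarrow> 'a \<Rightarrow> bool"
  assumes system: "glued_system L R"
begin

lemma index_finite_length: "finite_length_type TYPE('b)"
  using system unfolding glued_system_def by (elim conjE)

lemma component_fl_lattice: "fl_lattice (L x) (R x)"
  using system unfolding glued_system_def by simp

lemma R_refl: "a \<in> L x \<Longrightarrow> R x a a"
  using component_fl_lattice unfolding fl_lattice_def is_lattice_on_def partial_order_on'_def
  by blast

lemma R_antisym: "a \<in> L x \<Longrightarrow> b \<in> L x \<Longrightarrow> R x a b \<Longrightarrow> R x b a \<Longrightarrow> a = b"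
  using component_fl_lattice unfolding fl_lattice_def is_lattice_on_def partial_order_on'_def
  by blast

lemma R_trans: "a \<in> L x \<Longrightarrow> b \<in> L x \<Longrightarrow> c \<in> L x \<Longrightarrow> R x a b \<Longrightarrow> R x b c \<Longrightarrow> R x a c"
  using component_fl_lattice[of x] unfolding fl_lattice_def is_lattice_on_def partial_order_on'_def
  by (elim conjE) blast

lemma component_lub_exists: "a \<in> L x \<Longrightarrow> b \<in> L x \<Longrightarrow> \<exists>j. is_lub (L x) (R x) a b j"
  using component_fl_lattice unfolding fl_lattice_def is_lattice_on_def by blast

lemma component_glb_exists: "a \<in> L x \<Longrightarrow> b \<in> L x \<Longrightarrow> \<exists>m. is_glb (L x) (R x) a b m"
  using component_fl_lattice unfolding fl_lattice_def is_lattice_on_def by blast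

lemma overlap_filter_ideal:
  assumes "x \<le> y" "c \<in> L x" "c \<in> L y"
  shows "is_filter_on (L x) (R x) (L x \<inter> L y) \<and> is_ideal_on (L y) (R y) (L x \<inter> L y)"
proof -
  have "L x \<inter> L y \<noteq> {}" using assms(2,3) by blast
  then show ?thesis using system assms(1) unfolding glued_system_def by (elim conjE) simp
qed

lemma mem_upper_if_R:
  assumes "x \<le> y" "a \<in> L x" "a \<in> L y" "b \<in> L x" "R x a b"
  shows "b \<in> L y"
proof -
  have "\<forall>a\<in>L x \<inter> L y. \<forall>b\<in>L x. R x a b \<longrightarrow> b \<in> L x \<inter> L y"
    using overlap_filter_ideal[OF assms(1-3)] unfolding is_filter_on_def by (elim conjE)
  then show ?thesis using assms(2-5) by blast
qed

lemma mem_lower_if_R: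
  assumes "x \<le> y" "b \<in> L x" "b \<in> L y" "a \<in> L y" "R y a b"
  shows "a \<in> L x"
proof -
  have "\<forall>b\<in>L x \<inter> L y. \<forall>a\<in>L y. R y a b \<longrightarrow> a \<in> L x \<inter> L y"
    using overlap_filter_ideal[OF assms(1-3)] unfolding is_ideal_on_def by (elim conjE)
  then show ?thesis using assms(2-5) by blast
qed

lemma mem_upper_if_glb:
  assumes "x \<le> y" "a \<in> L x" "a \<in> L y" "b \<in> L x" "b \<in> L y" "is_glb (L x) (R x) a b m"
  shows "m \<in> L y"
proof -
  have "\<forall>a\<in>L x \<inter> L y. \<forall>b\<in>L x \<inter> L y. \<forall>m. is_glb (L x) (R x) a b m \<longrightarrow> m \<in> L x \<inter> L y"
    using overlap_filter_ideal[OF assms(1-3)] unfolding is_filter_on_def by (elim conjE)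
  then show ?thesis using assms(2-6) by blast
qed

lemma mem_inf_sup: "a \<in> L x \<Longrightarrow> a \<in> L y \<Longrightarrow> a \<in> L (inf x y) \<and> a \<in> L (sup x y)"
  using system unfolding glued_system_def by (elim conjE) (simp add: subset_iff)

lemma R_agree:
  assumes "a \<in> L x" "a \<in> L y" "b \<in> L x" "b \<in> L y"
  shows "R x a b \<longleftrightarrow> R y a b"
proof -
  have agree_le: "R u a b \<longleftrightarrow> R v a b" if "u \<le> v" "a \<in> L u" "a \<in> L v" "b \<in> L u" "b \<in> L v" for u v
  proof -
    have "L u \<inter> L v \<noteq> {}" using that by blast
    then show ?thesis using system that unfolding glued_system_def by (elim conjE) simp
  qed
  have "a \<in> L (inf x y)" "b \<in> L (inf x y)" using mem_inf_sup assms by blast+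
  then show ?thesis using agree_le[of "inf x y" x] agree_le[of "inf x y" y] assms by simp
qed

lemma covers_S_overlap: "covers_S x y \<Longrightarrow> \<exists>c. c \<in> L x \<and> c \<in> L y"
  using system unfolding glued_system_def by (elim conjE) (simp add: disjoint_iff)

lemma exists_overlapping_successor:
  assumes "y < x"
  obtains y' c where "y < y'" "y' \<le> x" "c \<in> L y" "c \<in> L y'"
proof -
  obtain y' where "covers_S y y'" "y' \<le> x"
    using exists_covers_S_above[OF index_finite_length assms] by blast
  moreover obtain c where "c \<in> L y" "c \<in> L y'" using covers_S_overlap[OF \<open>covers_S y y'\<close>] by blast
  ultimately show ?thesis using that unfolding covers_S_def by blast
qed

lemma exists_R_above_in_overlap:
  assumes "y \<le> y'" "u \<in> L y" "c \<in> L y" "c \<in> L y'"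
  obtains p where "p \<in> L y" "p \<in> L y'" "R y u p"
proof -
  obtain p where "is_lub (L y) (R y) u c p" using component_lub_exists[OF assms(2,3)] by blast
  then have "p \<in> L y" "R y u p" "R y c p" unfolding is_lub_def by auto
  then show ?thesis using that mem_upper_if_R[OF assms(1,3,4)] by blast
qed

(* The join of w with an element of the overlap of L x and a cover L x' lies in L x' and L y,
   hence by induction in L z; and w lies below it in L y. *)
lemma mem_between:
  assumes "x \<le> z" "z \<le> y" "w \<in> L x" "w \<in> L y"
  shows "w \<in> L z"
  using assms
proof (induction x arbitrary: w rule: finite_length_type_upward_induct[OF index_finite_length])
  case (1 x)
  show ?case
  proof (cases "x = z")
    case True
    then show ?thesis using "1.prems"(3) by simp
  next
    case False
    then obtain x' f where x': "x < x'" "x' \<le> z" and f: "f \<in> L x" "f \<in> L x'"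
      using "1.prems"(1) exists_overlapping_successor by (metis order.not_eq_order_implies_strict)
    obtain c where c: "c \<in> L x" "c \<in> L x'" "R x w c"
      using exists_R_above_in_overlap[OF less_imp_le[OF x'(1)] "1.prems"(3) f] .
    have "x \<le> y" using "1.prems"(1,2) by (rule order.trans)
    have "c \<in> L y" using mem_upper_if_R[OF \<open>x \<le> y\<close> "1.prems"(3,4) c(1,3)] .
    then have "c \<in> L z" using "1.IH"[OF x'(1) x'(2) "1.prems"(2) c(2)] by simp
    moreover have "R y w c" using R_agree[OF "1.prems"(3,4) c(1) \<open>c \<in> L y\<close>] c(3) by simp
    ultimately show ?thesis
      using mem_lower_if_R[OF "1.prems"(2) _ \<open>c \<in> L y\<close> "1.prems"(4)] by blast
  qed
qed

section \<open>The order of the glued sum\<close>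

lemma mem_glued_carrierI: "a \<in> L x \<Longrightarrow> a \<in> glued_carrier L"
  unfolding glued_carrier_def by blast

lemma mem_glued_carrierE:
  assumes "a \<in> glued_carrier L"
  obtains x where "a \<in> L x"
  using assms unfolding glued_carrier_def by blast

abbreviation steps :: "'a \<Rightarrow> 'a \<Rightarrow> bool" where
  "steps \<equiv> (glued_step L R)\<^sup>*\<^sup>*"

lemma glued_stepD: "glued_step L R a b \<Longrightarrow> \<exists>x. a \<in> L x \<and> b \<in> L x \<and> R x a b"
  unfolding glued_step_def .

lemma steps_if_R: "a \<in> L x \<Longrightarrow> b \<in> L x \<Longrightarrow> R x a b \<Longrightarrow> steps a b"
  unfolding glued_step_def by blast

lemma glued_le_imp_steps: "glued_le L R a b \<Longrightarrow> steps a b"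
  unfolding glued_le_eq_tranclp by (rule tranclp_into_rtranclp)

lemma glued_le_iff_steps:
  assumes "a \<in> L x"
  shows "glued_le L R a b \<longleftrightarrow> steps a b"
proof
  assume "steps a b"
  moreover have "glued_step L R a a" using assms R_refl unfolding glued_step_def by blast
  ultimately show "glued_le L R a b"
    unfolding glued_le_eq_tranclp by (metis rtranclpD tranclp.r_into_trancl)
qed (rule glued_le_imp_steps)

lemma glued_le_iff_steps_on_carrier:
  "a \<in> glued_carrier L \<Longrightarrow> glued_le L R a b \<longleftrightarrow> steps a b"
  using glued_le_iff_steps by (elim mem_glued_carrierE)

lemma steps_upward: "steps u t \<Longrightarrow> u \<in> L y \<Longrightarrow> \<exists>z. y \<le> z \<and> t \<in> L z"
proof (induction rule: rtranclp_induct)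
  case base
  then show ?case by blast
next
  case (step t t')
  then obtain z where z: "y \<le> z" "t \<in> L z" by blast
  obtain w where w: "t \<in> L w" "t' \<in> L w" "R w t t'" using glued_stepD[OF step(2)] by blast
  have "t \<in> L (sup z w)" using mem_inf_sup[OF z(2) w(1)] by blast
  then have "t' \<in> L (sup z w)" using mem_upper_if_R[of w "sup z w" t t'] w by simp
  moreover have "y \<le> sup z w" using z(1) le_supI1 by blast
  ultimately show ?case by blast
qed

lemma steps_downward: "steps u t \<Longrightarrow> t \<in> L y \<Longrightarrow> \<exists>z. z \<le> y \<and> u \<in> L z"
proof (induction rule: converse_rtranclp_induct)
  case base
  then show ?case by blast
next
  case (step u u')
  then obtain z where z: "z \<le> y" "u' \<in> L z" by blast
  obtain w where w: "u \<in> L w" "u' \<in> L w" "R w u u'" using glued_stepD[OF step(1)] by blast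
  have "u' \<in> L (inf z w)" using mem_inf_sup[OF z(2) w(2)] by blast
  then have "u \<in> L (inf z w)" using mem_lower_if_R[of "inf z w" w u' u] w by simp
  moreover have "inf z w \<le> y" using z(1) le_infI1 by blast
  ultimately show ?case by blast
qed

lemma mem_if_steps_between:
  assumes "u \<in> L x" "v \<in> L x" "steps u w" "steps w v"
  shows "w \<in> L x"
proof -
  obtain z where "x \<le> z" "w \<in> L z" using steps_upward[OF assms(3,1)] by blast
  moreover obtain z' where "z' \<le> x" "w \<in> L z'" using steps_downward[OF assms(4,2)] by blast
  ultimately show ?thesis using mem_between by blast
qed

lemma R_if_steps: "steps u v \<Longrightarrow> u \<in> L x \<Longrightarrow> v \<in> L x \<Longrightarrow> R x u v"
proof (induction rule: rtranclp_induct)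
  case base
  then show ?case by (simp add: R_refl)
next
  case (step w v)
  have "w \<in> L x"
    using mem_if_steps_between[OF step.prems step(1) r_into_rtranclp[of "glued_step L R", OF step(2)]] .
  obtain z where z: "w \<in> L z" "v \<in> L z" "R z w v" using glued_stepD[OF step(2)] by blast
  have "R x w v" using R_agree[OF \<open>w \<in> L x\<close> z(1) step.prems(2) z(2)] z(3) by simp
  then show ?case
    using R_trans[OF step.prems(1) \<open>w \<in> L x\<close> step.prems(2)] step.IH step.prems(1) \<open>w \<in> L x\<close>
    by blast
qed

lemma steps_antisym:
  assumes "steps u v" "steps v u" "u \<in> L x"
  shows "u = v"
proof -
  have "v \<in> L x" using mem_if_steps_between[OF assms(3,3,1,2)] .
  then show ?thesis using R_antisym[OF assms(3)] R_if_steps assms by blast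
qed

lemma exists_steps_into_upper:
  "u \<in> L y \<Longrightarrow> y \<le> z \<Longrightarrow> \<exists>c. c \<in> L z \<and> steps u c"
proof (induction y arbitrary: u rule: finite_length_type_upward_induct[OF index_finite_length])
  case (1 y)
  show ?case
  proof (cases "y = z")
    case True
    then show ?thesis using "1.prems"(1) by blast
  next
    case False
    then obtain y' f where y': "y < y'" "y' \<le> z" and f: "f \<in> L y" "f \<in> L y'"
      using "1.prems"(2) exists_overlapping_successor by (metis order.not_eq_order_implies_strict)
    obtain p where p: "p \<in> L y" "p \<in> L y'" "R y u p"
      using exists_R_above_in_overlap[OF less_imp_le[OF y'(1)] "1.prems"(1) f] .
    obtain c where "c \<in> L z" "steps p c" using "1.IH"[OF y'(1) p(2) y'(2)] by blast
    then show ?thesis using steps_if_R[OF "1.prems"(1) p(1,3)] by (meson rtranclp_trans)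
  qed
qed

(* Induction along the path u \<rightarrow> d \<leadsto> t: with w the component of the first step, reroute d
   through the overlap of L (y \<squnion> w) and L (y \<squnion> w \<squnion> y'), then meet the result, inside
   L (y \<squnion> w), with the join of u and f taken in L y. *)
lemma steps_through_overlap:
  assumes "steps u t" "y \<le> y'" "u \<in> L y" "f \<in> L y" "f \<in> L y'" "y' \<le> z" "t \<in> L z"
  shows "\<exists>r. r \<in> L y \<and> r \<in> L y' \<and> R y u r \<and> steps r t"
  using assms
proof (induction arbitrary: y y' f z rule: converse_rtranclp_induct)
  case base
  then have "t \<in> L y'" using mem_between by blast
  then show ?case using base.prems(2) R_refl by blast
next
  case (step u d)
  obtain w where w: "u \<in> L w" "d \<in> L w" "R w u d" using glued_stepD[OF step.hyps(1)] by blast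
  define z0 where "z0 = sup y w"
  have "y \<le> z0" "w \<le> z0" unfolding z0_def by simp_all
  have u: "u \<in> L z0" using mem_inf_sup[OF step.prems(2) w(1)] unfolding z0_def by blast
  have d: "d \<in> L z0" using mem_upper_if_R[OF \<open>w \<le> z0\<close> w(1) u w(2,3)] .
  have "R z0 u d" using R_agree[OF w(1) u w(2) d] w(3) by simp
  obtain p where p: "p \<in> L y" "p \<in> L y'" "R y u p"
    using exists_R_above_in_overlap[OF step.prems(1,2,3,4)] .
  have "p \<in> L z0" using mem_upper_if_R[OF \<open>y \<le> z0\<close> step.prems(2) u p(1,3)] .
  define y'' where "y'' = sup z0 y'"
  have "z0 \<le> y''" "y' \<le> y''" unfolding y''_def by simp_all
  have "p \<in> L y''" using mem_inf_sup[OF \<open>p \<in> L z0\<close> p(2)] unfolding y''_def by blast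
  obtain b where b: "z0 \<le> b" "t \<in> L b" using steps_upward[OF step.hyps(2) d] by blast
  have "t \<in> L (sup b z)" using mem_inf_sup[OF b(2) step.prems(6)] by blast
  moreover have "y'' \<le> sup b z"
    unfolding y''_def using b(1) step.prems(5) by (simp add: le_supI1 le_supI2)
  ultimately obtain r' where r': "r' \<in> L z0" "r' \<in> L y''" "R z0 d r'" "steps r' t"
    using step.IH[OF \<open>z0 \<le> y''\<close> d \<open>p \<in> L z0\<close> \<open>p \<in> L y''\<close>] by blast
  obtain r where r: "is_glb (L z0) (R z0) p r' r"
    using component_glb_exists[OF \<open>p \<in> L z0\<close> r'(1)] by blast
  then have "r \<in> L z0" "R z0 r p" "R z0 r r'" unfolding is_glb_def by blast+
  have "r \<in> L y''" using mem_upper_if_glb[OF \<open>z0 \<le> y''\<close> \<open>p \<in> L z0\<close> \<open>p \<in> L y''\<close> r'(1,2) r] .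
  have "r \<in> L y" using mem_lower_if_R[OF \<open>y \<le> z0\<close> p(1) \<open>p \<in> L z0\<close> \<open>r \<in> L z0\<close> \<open>R z0 r p\<close>] .
  have "r \<in> L y'" using mem_between[OF step.prems(1) \<open>y' \<le> y''\<close> \<open>r \<in> L y\<close> \<open>r \<in> L y''\<close>] .
  have "R z0 u p" using R_agree[OF step.prems(2) u p(1) \<open>p \<in> L z0\<close>] p(3) by simp
  moreover have "R z0 u r'" using R_trans[OF u d r'(1) \<open>R z0 u d\<close> r'(3)] .
  ultimately have "R z0 u r" using r u unfolding is_glb_def by blast
  then have "R y u r" using R_agree[OF step.prems(2) u \<open>r \<in> L y\<close> \<open>r \<in> L z0\<close>] by simp
  moreover have "steps r t" using steps_if_R[OF \<open>r \<in> L z0\<close> r'(1) \<open>R z0 r r'\<close>] r'(4) by simp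
  ultimately show ?case using \<open>r \<in> L y\<close> \<open>r \<in> L y'\<close> by blast
qed

lemma steps_to_component_glb:
  assumes "c1 \<in> L x" "c2 \<in> L x" "is_glb (L x) (R x) c1 c2 m" "steps u c1" "steps u c2"
  shows "steps u m"
proof -
  have "steps u m" if "u \<in> L y" "y \<le> x" "steps u c1" "steps u c2" for y
    using that
  proof (induction y arbitrary: u rule: finite_length_type_upward_induct[OF index_finite_length])
    case (1 y)
    show ?case
    proof (cases "y = x")
      case True
      then have "R x u c1" "R x u c2" using R_if_steps "1.prems" assms(1,2) by blast+
      then have "R x u m" using assms(3) \<open>y = x\<close> "1.prems"(1) unfolding is_glb_def by blast
      then show ?thesis using steps_if_R \<open>y = x\<close> "1.prems"(1) assms(3) unfolding is_glb_def by blast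
    next
      case False
      then obtain y' f where y': "y < y'" "y' \<le> x" and f: "f \<in> L y" "f \<in> L y'"
        using "1.prems"(2) exists_overlapping_successor by (metis order.not_eq_order_implies_strict)
      obtain r1 where r1: "r1 \<in> L y" "r1 \<in> L y'" "R y u r1" "steps r1 c1"
        using steps_through_overlap[OF "1.prems"(3) less_imp_le[OF y'(1)] "1.prems"(1) f y'(2) assms(1)]
        by blast
      obtain r2 where r2: "r2 \<in> L y" "r2 \<in> L y'" "R y u r2" "steps r2 c2"
        using steps_through_overlap[OF "1.prems"(4) less_imp_le[OF y'(1)] "1.prems"(1) f y'(2) assms(2)]
        by blast
      obtain r where r: "is_glb (L y) (R y) r1 r2 r" using component_glb_exists[OF r1(1) r2(1)] by blast
      then have "r \<in> L y" "R y r r1" "R y r r2" "R y u r"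
        using r1(3) r2(3) "1.prems"(1) unfolding is_glb_def by blast+
      have "r \<in> L y'" using mem_upper_if_glb[OF less_imp_le[OF y'(1)] r1(1,2) r2(1,2) r] .
      have "steps r c1" using steps_if_R[OF \<open>r \<in> L y\<close> r1(1) \<open>R y r r1\<close>] r1(4) by simp
      moreover have "steps r c2" using steps_if_R[OF \<open>r \<in> L y\<close> r2(1) \<open>R y r r2\<close>] r2(4) by simp
      ultimately have "steps r m" using "1.IH"[OF y'(1) \<open>r \<in> L y'\<close> y'(2)] by blast
      then show ?thesis using steps_if_R[OF "1.prems"(1) \<open>r \<in> L y\<close> \<open>R y u r\<close>] by simp
    qed
  qed
  moreover obtain y where "y \<le> x" "u \<in> L y" using steps_downward[OF assms(4,1)] by blast
  ultimately show ?thesis using assms(4,5) by blast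
qed

definition least_above :: "'b \<Rightarrow> 'a \<Rightarrow> 'a \<Rightarrow> bool" where
  "least_above x u c \<longleftrightarrow> c \<in> L x \<and> steps u c \<and> (\<forall>c'\<in>L x. steps u c' \<longrightarrow> R x c c')"

lemma least_above_exists:
  assumes "c0 \<in> L x" "steps u c0"
  shows "\<exists>c. least_above x u c"
proof -
  have "\<exists>c\<in>{c \<in> L x. steps u c}. \<forall>c'\<in>{c \<in> L x. steps u c}. R x c c'"
  proof (rule fl_lattice_least_in_glb_closed[OF component_fl_lattice])
    show "{c \<in> L x. steps u c} \<subseteq> L x" "c0 \<in> {c \<in> L x. steps u c}" using assms by auto
    fix a b m assume "a \<in> {c \<in> L x. steps u c}" "b \<in> {c \<in> L x. steps u c}" "is_glb (L x) (R x) a b m"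
    then show "m \<in> {c \<in> L x. steps u c}"
      using steps_to_component_glb[of a x b m u] unfolding is_glb_def by blast
  qed
  then show ?thesis unfolding least_above_def by blast
qed

lemma least_above_exists_if_le: "u \<in> L y \<Longrightarrow> y \<le> x \<Longrightarrow> \<exists>c. least_above x u c"
  using exists_steps_into_upper least_above_exists by blast

lemma steps_from_least_above:
  assumes "least_above x u c" "u \<in> L y" "y \<le> x" "x \<le> z" "t \<in> L z" "steps u t"
  shows "steps c t"
  using assms
proof (induction y arbitrary: u c rule: finite_length_type_upward_induct[OF index_finite_length])
  case (1 y)
  have c: "c \<in> L x" "\<And>c'. c' \<in> L x \<Longrightarrow> steps u c' \<Longrightarrow> R x c c'"
    using "1.prems"(1) unfolding least_above_def by blast+
  show ?case
  proof (cases "y = x")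
    case True
    then have "R x c u" using c "1.prems"(2) by blast
    then show ?thesis using steps_if_R[OF c(1)] "1.prems"(2,6) True by (meson rtranclp_trans)
  next
    case False
    then obtain y' f where y': "y < y'" "y' \<le> x" and f: "f \<in> L y" "f \<in> L y'"
      using "1.prems"(3) exists_overlapping_successor by (metis order.not_eq_order_implies_strict)
    obtain r where r: "r \<in> L y" "r \<in> L y'" "R y u r" "steps r t"
      using steps_through_overlap[OF "1.prems"(6) less_imp_le[OF y'(1)] "1.prems"(2) f
          order.trans[OF y'(2) "1.prems"(4)] "1.prems"(5)] by blast
    obtain c' where c': "least_above x r c'" using least_above_exists_if_le[OF r(2) y'(2)] by blast
    then have "steps c' t" using "1.IH"[OF y'(1) c' r(2) y'(2) "1.prems"(4,5) r(4)] by blast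
    have "c' \<in> L x" "steps r c'" using c' unfolding least_above_def by blast+
    then have "R x c c'" using c(2) steps_if_R[OF "1.prems"(2) r(1,3)] by (meson rtranclp_trans)
    then show ?thesis using steps_if_R[OF c(1) \<open>c' \<in> L x\<close>] \<open>steps c' t\<close> by simp
  qed
qed

end

section \<open>Duality\<close>

definition dual_carriers :: "('b \<Rightarrow> 'a set) \<Rightarrow> 'b dual \<Rightarrow> 'a set" where
  "dual_carriers L x = L (undual x)"

definition dual_orders :: "('b \<Rightarrow> 'a \<Rightarrow> 'a \<Rightarrow> bool) \<Rightarrow> 'b dual \<Rightarrow> 'a \<Rightarrow> 'a \<Rightarrow> bool" where
  "dual_orders R x a b \<longleftrightarrow> R (undual x) b a"

lemma covers_S_dual_iff: "covers_S (x::'b::order dual) y \<longleftrightarrow> covers_S (undual y) (undual x)"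
  unfolding covers_S_def dual_less_iff by (metis undual_dual)

lemma finite_length_type_dual:
  assumes "finite_length_type TYPE('b::lattice)"
  shows "finite_length_type TYPE('b dual)"
  unfolding finite_length_type_def
proof (intro allI impI)
  fix C :: "'b dual set"
  assume "\<forall>x\<in>C. \<forall>y\<in>C. x \<le> y \<or> y \<le> x"
  then have "\<forall>x\<in>undual ` C. \<forall>y\<in>undual ` C. x \<le> y \<or> y \<le> x"
    by (auto simp: dual_less_eq_iff)
  then have "finite (undual ` C)" using assms unfolding finite_length_type_def by blast
  then show "finite C" using finite_imageD inj_on_subset[OF inj_undual] by blast
qed

lemma glued_step_dual: "glued_step (dual_carriers L) (dual_orders R) = (glued_step L R)\<inverse>\<inverse>"
proof (intro ext iffI)
  fix a b
  assume "glued_step (dual_carriers L) (dual_orders R) a b"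
  then show "(glued_step L R)\<inverse>\<inverse> a b"
    unfolding glued_step_def dual_carriers_def dual_orders_def by auto
next
  fix a b
  assume "(glued_step L R)\<inverse>\<inverse> a b"
  then obtain x where "b \<in> L x" "a \<in> L x" "R x b a" unfolding glued_step_def by auto
  then show "glued_step (dual_carriers L) (dual_orders R) a b"
    unfolding glued_step_def dual_carriers_def dual_orders_def by (intro exI[of _ "dual x"]) simp
qed

lemma glued_carrier_dual: "glued_carrier (dual_carriers L) = glued_carrier L"
  unfolding glued_carrier_def dual_carriers_def by (metis surj_undual image_image)

lemma glued_le_dual: "glued_le (dual_carriers L) (dual_orders R) = (\<lambda>a b. glued_le L R b a)"
  unfolding glued_le_eq_tranclp glued_step_dual tranclp_converse by (simp add: fun_eq_iff)

context glued_sum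
begin

(* Reversing S and every component yields a glued system whose order is the converse one;
   this turns statements about meets into statements about joins. *)
lemma glued_sum_dual: "glued_sum (dual_carriers L) (dual_orders R)"
proof
  show "glued_system (dual_carriers L) (dual_orders R)"
    unfolding glued_system_def
  proof (intro conjI allI impI)
    show "finite_length_type TYPE('b dual)"
      using finite_length_type_dual[OF index_finite_length] .
  next
    fix x :: "'b dual"
    show "fl_lattice (dual_carriers L x) (dual_orders R x)"
      using fl_lattice_converse[OF component_fl_lattice[of "undual x"]]
      unfolding dual_carriers_def dual_orders_def[abs_def] .
  next
    fix x y :: "'b dual"
    assume "x \<le> y \<and> dual_carriers L x \<inter> dual_carriers L y \<noteq> {}"
    then obtain c where "undual y \<le> undual x" "c \<in> L (undual y)" "c \<in> L (undual x)"
      unfolding dual_carriers_def dual_less_eq_iff by blast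
    note overlap = overlap_filter_ideal[OF this]
    show "is_filter_on (dual_carriers L x) (dual_orders R x) (dual_carriers L x \<inter> dual_carriers L y)"
      using overlap unfolding dual_carriers_def dual_orders_def[abs_def] is_filter_on_converse
      by (simp add: Int_commute)
    show "is_ideal_on (dual_carriers L y) (dual_orders R y) (dual_carriers L x \<inter> dual_carriers L y)"
      using overlap unfolding dual_carriers_def dual_orders_def[abs_def] is_ideal_on_converse
      by (simp add: Int_commute)
    show "\<forall>a\<in>dual_carriers L x \<inter> dual_carriers L y. \<forall>b\<in>dual_carriers L x \<inter> dual_carriers L y.
        dual_orders R x a b = dual_orders R y a b"
      unfolding dual_carriers_def dual_orders_def using R_agree by blast
  next
    fix x y :: "'b dual"
    assume "covers_S x y"
    then show "dual_carriers L x \<inter> dual_carriers L y \<noteq> {}"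
      using covers_S_overlap unfolding covers_S_dual_iff dual_carriers_def by blast
  next
    fix x y :: "'b dual"
    show "dual_carriers L x \<inter> dual_carriers L y \<subseteq> dual_carriers L (inf x y) \<inter> dual_carriers L (sup x y)"
      unfolding dual_carriers_def using mem_inf_sup by auto
  qed
qed

lemma steps_from_component_lub:
  assumes "c1 \<in> L x" "c2 \<in> L x" "is_lub (L x) (R x) c1 c2 j" "steps c1 u" "steps c2 u"
  shows "steps j u"
proof -
  have "dual_orders R (dual x) = (\<lambda>a b. R x b a)" by (simp add: fun_eq_iff dual_orders_def)
  then have "is_glb (dual_carriers L (dual x)) (dual_orders R (dual x)) c1 c2 j"
    using assms(3) unfolding dual_carriers_def by (simp only: undual_dual is_glb_converse)
  then have "(glued_step (dual_carriers L) (dual_orders R))\<^sup>*\<^sup>* u j"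
    by (rule glued_sum.steps_to_component_glb[OF glued_sum_dual, rotated 2])
      (simp_all add: dual_carriers_def glued_step_dual rtranclp_conversep assms)
  then show ?thesis unfolding glued_step_dual rtranclp_conversep by simp
qed

section \<open>Semimodularity\<close>

lemma component_lub_is_glued_lub:
  assumes "b \<in> L z" "c \<in> L z" "is_lub (L z) (R z) b c j"
  shows "is_lub (glued_carrier L) (glued_le L R) b c j"
proof -
  have j: "j \<in> L z" "R z b j" "R z c j" using assms(3) unfolding is_lub_def by blast+
  show ?thesis
    unfolding is_lub_def
  proof (intro conjI ballI impI)
    show "j \<in> glued_carrier L" using mem_glued_carrierI[OF j(1)] .
    show "glued_le L R b j" using glued_le_iff_steps[OF assms(1)] steps_if_R[OF assms(1) j(1,2)] by simp
    show "glued_le L R c j" using glued_le_iff_steps[OF assms(2)] steps_if_R[OF assms(2) j(1,3)] by simp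
    fix u assume "glued_le L R b u \<and> glued_le L R c u"
    then have "steps j u" using steps_from_component_lub[OF assms] glued_le_imp_steps by blast
    then show "glued_le L R j u" using glued_le_iff_steps[OF j(1)] by simp
  qed
qed

lemma glued_step_if_covers_in:
  assumes "covers_in (glued_carrier L) (glued_le L R) a b"
  shows "glued_step L R a b"
proof -
  have "(glued_step L R)\<^sup>+\<^sup>+ a b" "a \<noteq> b"
    using assms unfolding covers_in_def glued_le_eq_tranclp by blast+
  then obtain t where t: "glued_step L R a t" "t \<noteq> a" "steps t b"
    using tranclp_first_proper_step by metis
  then obtain x where "t \<in> L x" using glued_stepD by blast
  then have "t \<in> glued_carrier L" "glued_le L R t b"
    using t(3) glued_le_iff_steps mem_glued_carrierI by blast+
  moreover have "glued_le L R a t" using t(1) unfolding glued_le_eq_tranclp by blast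
  ultimately have "t = b" using assms t(2) unfolding covers_in_def by blast
  then show ?thesis using t(1) by simp
qed

lemma covers_in_glued_iff_component:
  assumes "a \<in> L z" "b \<in> L z"
  shows "covers_in (glued_carrier L) (glued_le L R) a b \<longleftrightarrow> covers_in (L z) (R z) a b"
proof -
  have le_iff: "glued_le L R u v \<longleftrightarrow> R z u v" if "u \<in> L z" "v \<in> L z" for u v
    using glued_le_iff_steps[OF that(1)] steps_if_R R_if_steps that by blast
  have between_iff: "(d \<in> glued_carrier L \<and> glued_le L R a d \<and> glued_le L R d b)
      \<longleftrightarrow> (d \<in> L z \<and> R z a d \<and> R z d b)" for d
  proof
    assume d: "d \<in> glued_carrier L \<and> glued_le L R a d \<and> glued_le L R d b"
    then have "d \<in> L z" using mem_if_steps_between[OF assms] glued_le_imp_steps by blast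
    then show "d \<in> L z \<and> R z a d \<and> R z d b" using d le_iff assms by blast
  next
    assume "d \<in> L z \<and> R z a d \<and> R z d b"
    then show "d \<in> glued_carrier L \<and> glued_le L R a d \<and> glued_le L R d b"
      using le_iff assms mem_glued_carrierI by blast
  qed
  have "a \<in> glued_carrier L" "b \<in> glued_carrier L" using assms mem_glued_carrierI by blast+
  then show ?thesis
    unfolding covers_in_def using le_iff[OF assms] between_iff assms by blast
qed

lemma semimodular_glued_sum:
  assumes semimodular: "\<And>x. semimodular_on (L x) (R x)"
  shows "semimodular_on (glued_carrier L) (glued_le L R)"
  unfolding semimodular_on_def
proof (intro allI impI, elim conjE)
  fix a b c j
  assume ab: "covers_in (glued_carrier L) (glued_le L R) a b"
    and ac: "covers_in (glued_carrier L) (glued_le L R) a c"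
    and "b \<noteq> c" and j: "is_lub (glued_carrier L) (glued_le L R) b c j"
  obtain x where x: "a \<in> L x" "b \<in> L x" "R x a b" using glued_stepD[OF glued_step_if_covers_in[OF ab]] by blast
  obtain y where y: "a \<in> L y" "c \<in> L y" "R y a c" using glued_stepD[OF glued_step_if_covers_in[OF ac]] by blast
  define z where "z = sup x y"
  have "a \<in> L z" using mem_inf_sup[OF x(1) y(1)] unfolding z_def by blast
  then have b: "b \<in> L z" and c: "c \<in> L z"
    using mem_upper_if_R[OF _ x(1) _ x(2,3)] mem_upper_if_R[OF _ y(1) _ y(2,3)] unfolding z_def by simp_all
  obtain j' where j': "is_lub (L z) (R z) b c j'" using component_lub_exists[OF b c] by blast
  then have "j' \<in> L z" unfolding is_lub_def by blast
  have "glued_le L R j j'" "glued_le L R j' j"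
    using j component_lub_is_glued_lub[OF b c j'] unfolding is_lub_def by blast+
  then have "j = j'" using steps_antisym[OF _ _ \<open>j' \<in> L z\<close>] glued_le_imp_steps by metis
  have "covers_in (L z) (R z) b j' \<and> covers_in (L z) (R z) c j'"
    using semimodular[of z] \<open>b \<noteq> c\<close> j' ab ac \<open>a \<in> L z\<close> b c covers_in_glued_iff_component
    unfolding semimodular_on_def by blast
  then show "covers_in (glued_carrier L) (glued_le L R) b j \<and> covers_in (glued_carrier L) (glued_le L R) c j"
    using covers_in_glued_iff_component[OF b \<open>j' \<in> L z\<close>] covers_in_glued_iff_component[OF c \<open>j' \<in> L z\<close>]
      \<open>j = j'\<close> by blast
qed

section \<open>Breadth\<close>

lemma glued_lub_exists:
  assumes "a \<in> glued_carrier L" "b \<in> glued_carrier L"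
  shows "\<exists>j. is_lub (glued_carrier L) (glued_le L R) a b j"
proof -
  obtain ya yb where a: "a \<in> L ya" and b: "b \<in> L yb"
    using assms by (elim mem_glued_carrierE)
  define z where "z = sup ya yb"
  have "ya \<le> z" "yb \<le> z" unfolding z_def by simp_all
  obtain ca cb where ca: "least_above z a ca" and cb: "least_above z b cb"
    using least_above_exists_if_le[OF a \<open>ya \<le> z\<close>] least_above_exists_if_le[OF b \<open>yb \<le> z\<close>] by blast
  then have "ca \<in> L z" "steps a ca" "cb \<in> L z" "steps b cb" unfolding least_above_def by blast+
  obtain j where j: "is_lub (L z) (R z) ca cb j"
    using component_lub_exists[OF \<open>ca \<in> L z\<close> \<open>cb \<in> L z\<close>] by blast
  then have "j \<in> L z" "R z ca j" "R z cb j" unfolding is_lub_def by blast+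
  show ?thesis
    unfolding is_lub_def
  proof (intro exI conjI ballI impI)
    show "j \<in> glued_carrier L" using mem_glued_carrierI[OF \<open>j \<in> L z\<close>] .
    show "glued_le L R a j"
      using glued_le_iff_steps[OF a] \<open>steps a ca\<close> steps_if_R[OF \<open>ca \<in> L z\<close> \<open>j \<in> L z\<close> \<open>R z ca j\<close>]
      by simp
    show "glued_le L R b j"
      using glued_le_iff_steps[OF b] \<open>steps b cb\<close> steps_if_R[OF \<open>cb \<in> L z\<close> \<open>j \<in> L z\<close> \<open>R z cb j\<close>]
      by simp
    fix u assume "glued_le L R a u \<and> glued_le L R b u"
    then have "steps a u" "steps b u" using glued_le_imp_steps by blast+
    obtain za zb where "ya \<le> za" "u \<in> L za" "yb \<le> zb" "u \<in> L zb"
      using steps_upward[OF \<open>steps a u\<close> a] steps_upward[OF \<open>steps b u\<close> b] by blast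
    then have "u \<in> L (sup za zb)" "z \<le> sup za zb"
      using mem_inf_sup unfolding z_def by (blast, simp add: le_supI1 le_supI2 sup_mono)
    then have "steps ca u" "steps cb u"
      using steps_from_least_above[OF ca a \<open>ya \<le> z\<close>] steps_from_least_above[OF cb b \<open>yb \<le> z\<close>]
        \<open>steps a u\<close> \<open>steps b u\<close> by blast+
    then have "steps j u" using steps_from_component_lub[OF \<open>ca \<in> L z\<close> \<open>cb \<in> L z\<close> j] by blast
    then show "glued_le L R j u" using glued_le_iff_steps[OF \<open>j \<in> L z\<close>] by simp
  qed
qed

lemma glued_glb_exists:
  assumes "a \<in> glued_carrier L" "b \<in> glued_carrier L"
  shows "\<exists>m. is_glb (glued_carrier L) (glued_le L R) a b m"
  using glued_sum.glued_lub_exists[OF glued_sum_dual] assms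
  unfolding glued_carrier_dual glued_le_dual by (simp only: is_lub_converse)

lemma least_above_self: "least_above x v t \<Longrightarrow> v \<in> L x \<Longrightarrow> t = v"
  unfolding least_above_def using R_antisym R_if_steps by blast

lemma least_above_in_lower_component:
  assumes "least_above x v t" "v \<in> L y" "y < x"
  shows "\<exists>x'<x. t \<in> L x'"
proof -
  obtain x' where "y \<le> x'" "covers_S x' x"
    using exists_covers_S_below[OF index_finite_length assms(3)] by blast
  then have "x' < x" "x' \<le> x" unfolding covers_S_def by (simp_all add: less_imp_le)
  obtain f where f: "f \<in> L x'" "f \<in> L x" using covers_S_overlap[OF \<open>covers_S x' x\<close>] by blast
  obtain c where "c \<in> L x'" "steps v c" using exists_steps_into_upper[OF assms(2) \<open>y \<le> x'\<close>] by blast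
  obtain c' where c': "c' \<in> L x'" "c' \<in> L x" "R x' c c'"
    using exists_R_above_in_overlap[OF \<open>x' \<le> x\<close> \<open>c \<in> L x'\<close> f] .
  have "steps v c'" using \<open>steps v c\<close> steps_if_R[OF \<open>c \<in> L x'\<close> c'(1,3)] by simp
  then have "R x t c'" using assms(1) c'(2) unfolding least_above_def by blast
  moreover have "t \<in> L x" using assms(1) unfolding least_above_def by blast
  ultimately have "t \<in> L x'" using mem_lower_if_R[OF \<open>x' \<le> x\<close> c'(1,2)] by blast
  then show ?thesis using \<open>x' < x\<close> by blast
qed

lemma exists_minimal_bounding_component:
  assumes "t0 \<in> L x0" "\<forall>i<m. steps (e i) t0"
  obtains x s where "s \<in> L x" "\<And>i. i < m \<Longrightarrow> steps (e i) s"
    "\<And>c. c \<in> L x \<Longrightarrow> \<forall>i<m. steps (e i) c \<Longrightarrow> R x s c"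
    "\<And>x' c. x' < x \<Longrightarrow> c \<in> L x' \<Longrightarrow> \<exists>i<m. \<not> steps (e i) c"
proof -
  define B where "B x = {c \<in> L x. \<forall>i<m. steps (e i) c}" for x
  have "x0 \<in> {x. B x \<noteq> {}}" using assms unfolding B_def by blast
  then obtain x where "B x \<noteq> {}" and minimal: "\<And>x'. (x', x) \<in> {(a, b). a < b} \<Longrightarrow> B x' = {}"
    by (rule wfE_min[OF wf_less_if_finite_length_type[OF index_finite_length]]) blast
  then obtain c0 where "c0 \<in> B x" by blast
  have "\<exists>s\<in>B x. \<forall>c\<in>B x. R x s c"
  proof (rule fl_lattice_least_in_glb_closed[OF component_fl_lattice _ \<open>c0 \<in> B x\<close>])
    show "B x \<subseteq> L x" unfolding B_def by blast
    fix c d g assume "c \<in> B x" "d \<in> B x" "is_glb (L x) (R x) c d g"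
    then show "g \<in> B x" using steps_to_component_glb[of c x d g] unfolding B_def is_glb_def by blast
  qed
  moreover have "\<exists>i<m. \<not> steps (e i) c" if "x' < x" "c \<in> L x'" for x' c
    using minimal[of x'] that unfolding B_def by blast
  ultimately show ?thesis using that unfolding B_def by blast
qed

(* t is the least element of L x above v = w \<sqinter> s. If e j \<le> t then t = s, and s would lie in
   a component below x through which v reaches L x, contradicting the minimality of x. *)
lemma separator_in_minimal_component:
  assumes minimal: "\<And>x' c. x' < x \<Longrightarrow> c \<in> L x' \<Longrightarrow> \<exists>i<m. \<not> steps (e i) c"
    and s: "s \<in> L x" "\<And>i. i < m \<Longrightarrow> steps (e i) s"
      "\<And>c. c \<in> L x \<Longrightarrow> \<forall>i<m. steps (e i) c \<Longrightarrow> R x s c"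
    and e: "\<And>i. i < m \<Longrightarrow> e i \<in> glued_carrier L"
    and w: "w \<in> glued_carrier L" "\<And>i. i < m \<Longrightarrow> i \<noteq> j \<Longrightarrow> glued_le L R (e i) w"
      "\<not> glued_le L R (e j) w"
    and "j < m"
  shows "\<exists>t\<in>L x. (\<forall>i<m. i \<noteq> j \<longrightarrow> steps (e i) t) \<and> \<not> steps (e j) t"
proof -
  obtain v where v: "is_glb (glued_carrier L) (glued_le L R) w s v"
    using glued_glb_exists[OF w(1) mem_glued_carrierI[OF s(1)]] by blast
  then have "glued_le L R v w" "steps v s" unfolding is_glb_def using glued_le_imp_steps by blast+
  have ev: "steps (e i) v" if "i < m" "i \<noteq> j" for i
  proof -
    have "glued_le L R (e i) w" "glued_le L R (e i) s"
      using w(2) that s(2) glued_le_iff_steps_on_carrier[OF e] by blast+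
    then show ?thesis using v e that glued_le_imp_steps unfolding is_glb_def by blast
  qed
  have not_ev: "\<not> steps (e j) v"
  proof
    assume "steps (e j) v"
    then have "glued_le L R (e j) v" using glued_le_iff_steps_on_carrier[OF e[OF \<open>j < m\<close>]] by simp
    then show False
      using w(3) \<open>glued_le L R v w\<close> unfolding glued_le_eq_tranclp by (meson tranclp_trans)
  qed
  obtain t where t: "least_above x v t" using least_above_exists[OF s(1) \<open>steps v s\<close>] by blast
  then have "t \<in> L x" "steps v t" unfolding least_above_def by blast+
  have "\<not> steps (e j) t"
  proof
    assume "steps (e j) t"
    then have "\<forall>i<m. steps (e i) t" using ev \<open>steps v t\<close> by (metis rtranclp_trans)
    then have "R x s t" using s(3) \<open>t \<in> L x\<close> by blast
    moreover have "R x t s" using t s(1) \<open>steps v s\<close> unfolding least_above_def by blast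
    ultimately have "t = s" using R_antisym[OF \<open>t \<in> L x\<close> s(1)] by blast
    obtain y where "y \<le> x" "v \<in> L y" using steps_downward[OF \<open>steps v s\<close> s(1)] by blast
    show False
    proof (cases "y = x")
      case True
      then show False using least_above_self[OF t] \<open>v \<in> L y\<close> \<open>steps (e j) t\<close> not_ev by simp
    next
      case False
      then have "y < x" using \<open>y \<le> x\<close> by simp
      then obtain x' where "x' < x" "s \<in> L x'"
        using least_above_in_lower_component[OF t \<open>v \<in> L y\<close>] \<open>t = s\<close> by blast
      then show False using minimal s(2) by blast
    qed
  qed
  then show ?thesis using \<open>t \<in> L x\<close> ev \<open>steps v t\<close> by (meson rtranclp_trans)
qed

lemma separating_family_in_component:
  assumes e: "\<And>i. i < m \<Longrightarrow> e i \<in> glued_carrier L"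
    and w: "\<And>j. j < m \<Longrightarrow> w j \<in> glued_carrier L"
    and separating: "\<And>i j. i < m \<Longrightarrow> j < m \<Longrightarrow> glued_le L R (e i) (w j) \<longleftrightarrow> i \<noteq> j"
    and bound: "t0 \<in> L x0" "\<forall>i<m. steps (e i) t0"
  shows "\<exists>x a b. (\<forall>i<m. a i \<in> L x \<and> b i \<in> L x) \<and> (\<forall>i<m. \<forall>j<m. R x (a i) (b j) \<longleftrightarrow> i \<noteq> j)"
proof -
  obtain x s where s: "s \<in> L x" "\<And>i. i < m \<Longrightarrow> steps (e i) s"
      "\<And>c. c \<in> L x \<Longrightarrow> \<forall>i<m. steps (e i) c \<Longrightarrow> R x s c"
    and minimal: "\<And>x' c. x' < x \<Longrightarrow> c \<in> L x' \<Longrightarrow> \<exists>i<m. \<not> steps (e i) c"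
    by (rule exists_minimal_bounding_component[OF bound]) (rule that)
  have "\<exists>t\<in>L x. (\<forall>i<m. i \<noteq> j \<longrightarrow> steps (e i) t) \<and> \<not> steps (e j) t" if "j < m" for j
  proof (rule separator_in_minimal_component[OF minimal s e w[OF that] _ _ that])
    show "glued_le L R (e i) (w j)" if "i < m" "i \<noteq> j" for i
      using separating that \<open>j < m\<close> by blast
    show "\<not> glued_le L R (e j) (w j)" using separating \<open>j < m\<close> by blast
  qed
  then have "\<forall>j. \<exists>t. j < m \<longrightarrow> t \<in> L x \<and> (\<forall>i<m. i \<noteq> j \<longrightarrow> steps (e i) t) \<and> \<not> steps (e j) t"
    by blast
  then obtain b where b: "\<forall>j. j < m \<longrightarrow>
      b j \<in> L x \<and> (\<forall>i<m. i \<noteq> j \<longrightarrow> steps (e i) (b j)) \<and> \<not> steps (e j) (b j)"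
    by (rule exE[OF choice]) (rule that)
  have "\<forall>i. \<exists>c. i < m \<longrightarrow> least_above x (e i) c" using least_above_exists[OF s(1,2)] by blast
  then obtain a where a: "\<forall>i. i < m \<longrightarrow> least_above x (e i) (a i)"
    by (rule exE[OF choice]) (rule that)
  have "R x (a i) (b j) \<longleftrightarrow> i \<noteq> j" if "i < m" "j < m" for i j
  proof
    assume "R x (a i) (b j)"
    then have "steps (e i) (b j)"
      using a b that steps_if_R unfolding least_above_def by (meson rtranclp_trans)
    then show "i \<noteq> j" using b that(2) by blast
  next
    assume "i \<noteq> j"
    then show "R x (a i) (b j)" using a b that unfolding least_above_def by blast
  qed
  moreover have "a i \<in> L x" if "i < m" for i using a that unfolding least_above_def by blast
  ultimately show ?thesis using b by blast
qed

lemma breadth_glued_sum: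
  assumes breadth: "\<And>x. breadth_le (L x) (R x) n"
  shows "breadth_le (glued_carrier L) (glued_le L R) n"
  unfolding breadth_le_def
proof (intro allI impI, elim conjE)
  fix m and \<phi> :: "nat set \<Rightarrow> 'a"
  assume mem: "\<forall>X. X \<subseteq> {0..<m} \<longrightarrow> \<phi> X \<in> glued_carrier L"
    and embedding: "\<forall>X Y. X \<subseteq> {0..<m} \<and> Y \<subseteq> {0..<m} \<longrightarrow> glued_le L R (\<phi> X) (\<phi> Y) = (X \<subseteq> Y)"
  have singleton: "{i} \<subseteq> {0..<m}" and co_singleton: "{0..<m} - {i} \<subseteq> {0..<m}" if "i < m" for i
    using that by auto
  obtain x0 where x0: "\<phi> {0..<m} \<in> L x0" using mem by (blast elim: mem_glued_carrierE)
  have "glued_le L R (\<phi> {i}) (\<phi> {0..<m})" if "i < m" for i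
    using embedding singleton[OF that] that by auto
  then have bound: "\<forall>i<m. steps (\<phi> {i}) (\<phi> {0..<m})" using glued_le_imp_steps by blast
  have "\<exists>x a b. (\<forall>i<m. a i \<in> L x \<and> b i \<in> L x) \<and> (\<forall>i<m. \<forall>j<m. R x (a i) (b j) \<longleftrightarrow> i \<noteq> j)"
  proof (rule separating_family_in_component[OF _ _ _ x0 bound])
    show "\<phi> {i} \<in> glued_carrier L" if "i < m" for i using mem singleton[OF that] by blast
    show "\<phi> ({0..<m} - {j}) \<in> glued_carrier L" if "j < m" for j using mem co_singleton[OF that] by blast
    show "glued_le L R (\<phi> {i}) (\<phi> ({0..<m} - {j})) \<longleftrightarrow> i \<noteq> j" if "i < m" "j < m" for i j
      using embedding singleton[OF that(1)] co_singleton[OF that(2)] that(1) by auto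
  qed
  then obtain x a b where ab: "\<forall>i<m. a i \<in> L x \<and> b i \<in> L x"
    and separating: "\<forall>i<m. \<forall>j<m. R x (a i) (b j) \<longleftrightarrow> i \<noteq> j"
    by blast
  show "m \<le> n"
  proof (rule breadth_le_separating_family[OF component_fl_lattice breadth])
    show "a i \<in> L x" if "i < m" for i using ab that by blast
    show "b j \<in> L x" if "j < m" for j using ab that by blast
    show "R x (a i) (b j) \<longleftrightarrow> i \<noteq> j" if "i < m" "j < m" for i j using separating that by blast
  qed
qed

end

theorem theorem3p3:
  fixes n :: nat
    and L :: "'b::lattice \<Rightarrow> 'a set"
    and R :: "'b \<Rightarrow> 'a \<Rightarrow> 'a \<Rightarrow> bool"
  assumes "glued_system L R"
    and "\<And>x. semimodular_on (L x) (R x)"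
    and "\<And>x. breadth_le (L x) (R x) n"
  shows "semimodular_on (glued_carrier L) (glued_le L R)
     \<and> breadth_le (glued_carrier L) (glued_le L R) n"
proof -
  interpret glued_sum L R by (rule glued_sum.intro) (rule assms(1))
  show ?thesis using semimodular_glued_sum[OF assms(2)] breadth_glued_sum[OF assms(3)] by blast
qed

end
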